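(* Let $f:\mathbb{R}^n\to\mathbb{R}^n$ be a polynomial vector field (each component $f_j$ is a polynomial in $x=(x_1,\ldots,x_n)$ with real coefficients), and let $G$ be the weighted dependency graph of $f$. Suppose that for every cycle $c$ of $G$, the weight $\gamma_c$ is a constant function of $x$. Then $f$ is super-linearizable, i.e., the system $\dot x(t)=f(x(t))$ admits a super-linearization.
   Context: Weighted dependency graph: for a differentiable $f:\mathbb{R}^n\to\mathbb{R}^n$, $G$ is the directed graph (self-loops allowed) on nodes $v_1,\ldots,v_n$ where, with $\gamma_{ij}(x):=\frac{\partial f_j(x)}{\partial x_i}$ for $1\le i,j\le n$, there is a directed edge $v_iv_j$ (from $v_i$ to $v_j$; a self-loop if $i=j$) precisely when $\gamma_{ij}$ is not identically zero, and this edge has weight $\gamma_{ij}$. A cycle is a closed walk $c=v_{i_1}v_{i_2}\cdots v_{i_k}v_{i_1}$ ($k\ge 1$, with $v_{i_1},\ldots,v_{i_k}$ distinct and consecutive nodes joined by edges of $G$; a self-loop is a cycle with $k=1$). For a walk $w=v_{j_1}v_{j_2}\cdots v_{j_r}$, its weight is $\gamma_w:=\prod_{s=1}^{r-1}\gamma_{j_sj_{s+1}}$. Super-linearization: let $\Pi:\mathbb{R}^{n+m}\to\mathbb{R}^n$ be the projection $\Pi(z)=(z_1,\ldots,z_n)$. A vector field $f:\mathbb{R}^n\to\mathbb{R}^n$ is super-linearizable if there exist an integer $m\ge 0$, a matrix $A\in\mathbb{R}^{(n+m)\times(n+m)}$, a vector $D\in\mathbb{R}^{n+m}$ and an injective map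 $p:\mathbb{R}^n\to\mathbb{R}^m$ (the observables) such that for all $x_0\in\mathbb{R}^n$ and all $t$, $\Pi\big(e^{t(Az+D)}z_0\big)=e^{tf}x_0$ where $z_0=(x_0,p(x_0))$. Here $e^{tg}y_0$ denotes the solution at time $t$ of $\dot y=g(y)$ with initial state $y_0$. *)

theory Defs
  imports "HOL-Analysis.Analysis"
begin

text \<open>Points of R^n are represented as functions nat => real; only the
coordinates 0..n-1 matter. The carrier of R^n is the set of such functions
vanishing at indices >= n.\<close>

definition Rn :: "nat \<Rightarrow> (nat \<Rightarrow> real) set" where
  "Rn n = {x. \<forall>i\<ge>n. x i = 0}"

inductive poly_fun :: "nat \<Rightarrow> ((nat \<Rightarrow> real) \<Rightarrow> real) \<Rightarrow> bool" for n where
  const: "poly_fun n (\<lambda>x. c)"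
| var: "i < n \<Longrightarrow> poly_fun n (\<lambda>x. x i)"
| add: "poly_fun n p \<Longrightarrow> poly_fun n q \<Longrightarrow> poly_fun n (\<lambda>x. p x + q x)"
| mult: "poly_fun n p \<Longrightarrow> poly_fun n q \<Longrightarrow> poly_fun n (\<lambda>x. p x * q x)"

definition poly_vector_field :: "nat \<Rightarrow> ((nat \<Rightarrow> real) \<Rightarrow> (nat \<Rightarrow> real)) \<Rightarrow> bool" where
  "poly_vector_field n f \<longleftrightarrow> (\<forall>j<n. poly_fun n (\<lambda>x. f x j))"

definition gamma :: "((nat \<Rightarrow> real) \<Rightarrow> (nat \<Rightarrow> real)) \<Rightarrow> nat \<Rightarrow> nat \<Rightarrow> (nat \<Rightarrow> real) \<Rightarrow> real" where
  "gamma f i j x = deriv (\<lambda>s. f (x(i := s)) j) (x i)"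

definition dep_edge :: "nat \<Rightarrow> ((nat \<Rightarrow> real) \<Rightarrow> (nat \<Rightarrow> real)) \<Rightarrow> nat \<Rightarrow> nat \<Rightarrow> bool" where
  "dep_edge n f i j \<longleftrightarrow> i < n \<and> j < n \<and> (\<exists>x\<in>Rn n. gamma f i j x \<noteq> 0)"

definition dep_cycle :: "nat \<Rightarrow> ((nat \<Rightarrow> real) \<Rightarrow> (nat \<Rightarrow> real)) \<Rightarrow> nat list \<Rightarrow> bool" where
  "dep_cycle n f c \<longleftrightarrow> c \<noteq> [] \<and> distinct c \<and>
     (\<forall>s<length c. dep_edge n f (c ! s) (c ! ((s + 1) mod length c)))"

definition cycle_weight :: "((nat \<Rightarrow> real) \<Rightarrow> (nat \<Rightarrow> real)) \<Rightarrow> nat list \<Rightarrow> (nat \<Rightarrow> real) \<Rightarrow> real" where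
  "cycle_weight f c x = (\<Prod>s<length c. gamma f (c ! s) (c ! ((s + 1) mod length c)) x)"

definition is_solution :: "nat \<Rightarrow> ((nat \<Rightarrow> real) \<Rightarrow> (nat \<Rightarrow> real)) \<Rightarrow> real set \<Rightarrow>
    (nat \<Rightarrow> real) \<Rightarrow> (real \<Rightarrow> nat \<Rightarrow> real) \<Rightarrow> bool" where
  "is_solution n f T x0 x \<longleftrightarrow> 0 \<in> T \<and> (\<forall>t\<in>T. x t \<in> Rn n) \<and> (\<forall>i<n. x 0 i = x0 i) \<and>
     (\<forall>t\<in>T. \<forall>i<n. ((\<lambda>s. x s i) has_real_derivative f (x t) i) (at t))"

text \<open>Super-linearizability: there are m, A in R^((n+m)x(n+m)), D in R^(n+m) and an
injective p : R^n -> R^m such that for every x0 in R^n, the solution z of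
zdot = A z + D with z(0) = (x0, p x0) (global, since the system is affine) projects
onto the solution of xdot = f(x) from x0, at every time t where the latter is defined
(i.e. on every open interval around 0 on which a solution exists).\<close>

definition super_linearizable :: "nat \<Rightarrow> ((nat \<Rightarrow> real) \<Rightarrow> (nat \<Rightarrow> real)) \<Rightarrow> bool" where
  "super_linearizable n f \<longleftrightarrow>
    (\<exists>(m::nat) (A::nat \<Rightarrow> nat \<Rightarrow> real) (D::nat \<Rightarrow> real) (p::(nat \<Rightarrow> real) \<Rightarrow> (nat \<Rightarrow> real)).
       (\<forall>x\<in>Rn n. \<forall>y\<in>Rn n. (\<forall>k<m. p x k = p y k) \<longrightarrow> x = y) \<and>
       (\<forall>x0\<in>Rn n. \<forall>z::real \<Rightarrow> nat \<Rightarrow> real.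
          ((\<forall>k<n. z 0 k = x0 k) \<and> (\<forall>k<m. z 0 (n + k) = p x0 k) \<and>
           (\<forall>t. \<forall>k<n+m. ((\<lambda>s. z s k) has_real_derivative
                 ((\<Sum>l<n+m. A k l * z t l) + D k)) (at t)))
          \<longrightarrow> (\<forall>a b x. a < 0 \<and> 0 < b \<and> is_solution n f {a<..<b} x0 x
                 \<longrightarrow> (\<forall>t\<in>{a<..<b}. \<forall>i<n. z t i = x t i))))"

end

theory Submission
  imports Defs "HOL-Computational_Algebra.Polynomial" "HOL-Library.Transitive_Closure_Table"
begin

text \<open>An edge v_i v_j with v_j reaching v_i lies on a cycle; the cycle weight is a nonzero constant
  product of polynomial edge weights, so each of them is constant. Hence f_j is linear in the
  variables that are not strictly upstream of v_j, plus a polynomial in the strictly upstream ones.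
  Giving x_i the weight B^u(i), where u(i) counts the nodes strictly upstream of v_i and B is large,
  every f_j gets weighted degree at most the weight of x_j. Substituting f for x then never raises
  weighted degrees, so the finitely many monomials of bounded weighted degree, among them the
  coordinates, span a space invariant under differentiation along f: they are the observables of
  a super-linearization.\<close>

section \<open>Polynomial functions\<close>

lemma poly_fun_on_line:
  assumes "poly_fun n p"
  shows "\<exists>P. \<forall>s. p (\<lambda>k. x k + s * v k) = poly P s"
  using assms
proof induction
  case (const c) show ?case by (intro exI[of _ "[:c:]"]) simp
next
  case (var i) show ?case by (intro exI[of _ "[:x i, v i:]"]) simp
next
  case (add p q)
  then obtain P Q where "\<forall>s. p (\<lambda>k. x k + s * v k) = poly P s" "\<forall>s. q (\<lambda>k. x k + s * v k) = poly Q s"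
    by blast
  then show ?case by (intro exI[of _ "P + Q"]) simp
next
  case (mult p q)
  then obtain P Q where "\<forall>s. p (\<lambda>k. x k + s * v k) = poly P s" "\<forall>s. q (\<lambda>k. x k + s * v k) = poly Q s"
    by blast
  then show ?case by (intro exI[of _ "P * Q"]) simp
qed

lemma line_in_Rn: "x \<in> Rn n \<Longrightarrow> v \<in> Rn n \<Longrightarrow> (\<lambda>k. x k + s * v k) \<in> Rn n"
  by (simp add: Rn_def)

lemma poly_fun_partial_derivative:
  assumes "poly_fun n p"
  shows "\<exists>q. poly_fun n q \<and> (\<forall>x s. ((\<lambda>s. p (x(i := s))) has_real_derivative q (x(i := s))) (at s))"
  using assms
proof induction
  case (const c)
  show ?case by (intro exI[of _ "\<lambda>x. 0"]) (auto intro: poly_fun.const)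
next
  case (var k)
  show ?case
  proof (cases "k = i")
    case True
    then show ?thesis by (intro exI[of _ "\<lambda>x. 1"]) (auto intro: poly_fun.const derivative_eq_intros)
  next
    case False
    then show ?thesis by (intro exI[of _ "\<lambda>x. 0"]) (auto intro: poly_fun.const)
  qed
next
  case (add p q)
  then obtain p' q' where "poly_fun n p'" "poly_fun n q'"
    and "\<forall>x s. ((\<lambda>s. p (x(i := s))) has_real_derivative p' (x(i := s))) (at s)"
    and "\<forall>x s. ((\<lambda>s. q (x(i := s))) has_real_derivative q' (x(i := s))) (at s)"
    by blast
  then show ?case
    by (intro exI[of _ "\<lambda>x. p' x + q' x"] conjI allI poly_fun.add DERIV_add) blast+
next
  case (mult p q)
  then obtain p' q' where "poly_fun n p'" "poly_fun n q'"
    and "\<forall>x s. ((\<lambda>s. p (x(i := s))) has_real_derivative p' (x(i := s))) (at s)"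
    and "\<forall>x s. ((\<lambda>s. q (x(i := s))) has_real_derivative q' (x(i := s))) (at s)"
    by blast
  note d = this
  show ?case
  proof (intro exI[of _ "\<lambda>x. p' x * q x + p x * q' x"] conjI allI)
    show "poly_fun n (\<lambda>x. p' x * q x + p x * q' x)"
      using d mult.hyps by (intro poly_fun.add poly_fun.mult)
    fix x s
    have "((\<lambda>s. p (x(i := s)) * q (x(i := s))) has_real_derivative
        p' (x(i := s)) * q (x(i := s)) + q' (x(i := s)) * p (x(i := s))) (at s)"
      using d(3,4) by (intro DERIV_mult) simp_all
    then show "((\<lambda>s. p (x(i := s)) * q (x(i := s))) has_real_derivative
        p' (x(i := s)) * q (x(i := s)) + p (x(i := s)) * q' (x(i := s))) (at s)"
      by (simp add: algebra_simps)
  qed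
qed

lemma gamma_poly_fun:
  assumes "poly_fun n (\<lambda>x. f x j)"
  shows "poly_fun n (gamma f i j)"
    and "((\<lambda>s. f (x(i := s)) j) has_real_derivative gamma f i j (x(i := s))) (at s)"
proof -
  obtain q where q: "poly_fun n q"
    and dq: "\<And>x s. ((\<lambda>s. f (x(i := s)) j) has_real_derivative q (x(i := s))) (at s)"
    using poly_fun_partial_derivative[OF assms, of i] by blast
  have "gamma f i j y = q y" for y
    using DERIV_imp_deriv[OF dq[of y "y i"]] by (simp add: gamma_def)
  then have "gamma f i j = q" ..
  with q dq show "poly_fun n (gamma f i j)"
    and "((\<lambda>s. f (x(i := s)) j) has_real_derivative gamma f i j (x(i := s))) (at s)"
    by simp_all
qed

lemma poly_fun_prod:
  assumes "finite I" "\<And>s. s \<in> I \<Longrightarrow> poly_fun n (g s)"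
  shows "poly_fun n (\<lambda>x. \<Prod>s\<in>I. g s x)"
  using assms by (induction I rule: finite_induct) (auto intro: poly_fun.const poly_fun.mult)

lemma poly_fun_mult_nonzero:
  assumes "poly_fun n p" "poly_fun n q" "a \<in> Rn n" "b \<in> Rn n" "p a \<noteq> 0" "q b \<noteq> 0"
  shows "\<exists>x\<in>Rn n. p x * q x \<noteq> 0"
proof -
  define v where "v k = b k - a k" for k
  have v: "v \<in> Rn n" using assms(3,4) by (simp add: Rn_def v_def)
  obtain P where P: "\<And>s. p (\<lambda>k. a k + s * v k) = poly P s" using poly_fun_on_line[OF assms(1)] by blast
  obtain Q where Q: "\<And>s. q (\<lambda>k. a k + s * v k) = poly Q s" using poly_fun_on_line[OF assms(2)] by blast
  have "poly P 0 \<noteq> 0" using P[of 0] assms(5) by simp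
  moreover have "poly Q 1 \<noteq> 0" using Q[of 1] assms(6) by (simp add: v_def)
  ultimately have "P * Q \<noteq> 0" by auto
  then obtain s where "poly (P * Q) s \<noteq> 0" using poly_all_0_iff_0 by blast
  then have "p (\<lambda>k. a k + s * v k) * q (\<lambda>k. a k + s * v k) \<noteq> 0" using P Q by simp
  with line_in_Rn[OF assms(3) v] show ?thesis by blast
qed

lemma poly_fun_prod_nonzero:
  assumes "finite I" "\<And>s. s \<in> I \<Longrightarrow> poly_fun n (g s) \<and> (\<exists>x\<in>Rn n. g s x \<noteq> 0)"
  shows "\<exists>x\<in>Rn n. (\<Prod>s\<in>I. g s x) \<noteq> 0"
  using assms
proof (induction I rule: finite_induct)
  case empty
  show ?case by (intro bexI[of _ "\<lambda>_. 0"]) (auto simp: Rn_def)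
next
  case (insert s0 I)
  obtain a where "a \<in> Rn n" "g s0 a \<noteq> 0" using insert.prems by blast
  moreover have "\<exists>b\<in>Rn n. (\<Prod>s\<in>I. g s b) \<noteq> 0" using insert.prems by (intro insert.IH) auto
  then obtain b where "b \<in> Rn n" "(\<Prod>s\<in>I. g s b) \<noteq> 0" ..
  moreover have "poly_fun n (g s0)" using insert.prems by blast
  moreover have "poly_fun n (\<lambda>x. \<Prod>s\<in>I. g s x)" using insert by (intro poly_fun_prod) auto
  ultimately have "\<exists>x\<in>Rn n. g s0 x * (\<Prod>s\<in>I. g s x) \<noteq> 0"
    by (intro poly_fun_mult_nonzero)
  then show ?case by (simp add: insert.hyps)
qed

text \<open>On the line through a and b the two factors become univariate polynomials whose product
  is a nonzero constant, so both have degree 0.\<close>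

lemma poly_fun_factor_of_const:
  assumes "poly_fun n p" "poly_fun n q" "\<And>x. x \<in> Rn n \<Longrightarrow> p x * q x = w" "w \<noteq> 0"
    and "a \<in> Rn n" "b \<in> Rn n"
  shows "p a = p b"
proof -
  define v where "v k = b k - a k" for k
  have v: "v \<in> Rn n" using assms(5,6) by (simp add: Rn_def v_def)
  obtain P where P: "\<And>s. p (\<lambda>k. a k + s * v k) = poly P s" using poly_fun_on_line[OF assms(1)] by blast
  obtain Q where Q: "\<And>s. q (\<lambda>k. a k + s * v k) = poly Q s" using poly_fun_on_line[OF assms(2)] by blast
  have "poly (P * Q) s = poly [:w:] s" for s
    using assms(3)[OF line_in_Rn[OF assms(5) v]] P Q by simp
  then have "poly (P * Q) = poly [:w:]" ..
  then have PQ: "P * Q = [:w:]" by (simp add: poly_eq_poly_eq_iff)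
  with assms(4) have "P \<noteq> 0" "Q \<noteq> 0" by auto
  with PQ have "degree P = 0" using degree_mult_eq[of P Q] by simp
  then obtain c where "P = [:c:]" by (rule degree_eq_zeroE)
  then have "poly P 0 = poly P 1" by simp
  then show ?thesis using P[of 0] P[of 1] by (simp add: v_def)
qed

lemma poly_fun_prod_factor_const:
  assumes "finite I" "s0 \<in> I" "\<And>s. s \<in> I \<Longrightarrow> poly_fun n (g s) \<and> (\<exists>x\<in>Rn n. g s x \<noteq> 0)"
    and "\<And>x. x \<in> Rn n \<Longrightarrow> (\<Prod>s\<in>I. g s x) = w" "a \<in> Rn n" "b \<in> Rn n"
  shows "g s0 a = g s0 b"
proof (rule poly_fun_factor_of_const[where p = "g s0" and q = "\<lambda>x. \<Prod>s\<in>I - {s0}. g s x"])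
  show "poly_fun n (g s0)" using assms(2,3) by blast
  show "poly_fun n (\<lambda>x. \<Prod>s\<in>I - {s0}. g s x)" using assms(1,3) by (intro poly_fun_prod) auto
  show "g s0 x * (\<Prod>s\<in>I - {s0}. g s x) = w" if "x \<in> Rn n" for x
    using assms(4)[OF that] prod.remove[OF assms(1,2), of "\<lambda>s. g s x"] by simp
  obtain x where "x \<in> Rn n" "(\<Prod>s\<in>I. g s x) \<noteq> 0"
    using poly_fun_prod_nonzero[where g = g, OF assms(1,3)] by blast
  with assms(4) show "w \<noteq> 0" by simp
qed (fact assms)+

section \<open>The dependency graph\<close>

lemma dep_cycle_through_edge:
  assumes "dep_edge n f i j" "(dep_edge n f)\<^sup>*\<^sup>* j i"
  obtains c where "dep_cycle n f c" "c ! 0 = j" "c ! (length c - 1) = i"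
proof -
  obtain xs where path: "rtrancl_path (dep_edge n f) j xs i" and dist: "distinct (j # xs)"
    using assms(2) rtranclp_eq_rtrancl_path rtrancl_path_distinct by metis
  define c where "c = j # xs"
  have last: "c ! (length c - 1) = i"
  proof (cases "xs = []")
    case True
    with path show ?thesis by (auto simp: c_def elim: rtrancl_path.cases)
  next
    case False
    with rtrancl_path_last[OF path] show ?thesis by (simp add: c_def last_conv_nth)
  qed
  have "dep_edge n f (c ! s) (c ! ((s + 1) mod length c))" if "s < length c" for s
  proof (cases "s < length xs")
    case True
    then show ?thesis using rtrancl_path_nth[OF path True] by (simp add: c_def)
  next
    case False
    with that have "s = length xs" by (simp add: c_def)
    then have "s = length c - 1" "(s + 1) mod length c = 0" by (simp_all add: c_def)
    with last assms(1) show ?thesis by (simp add: c_def)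
  qed
  with dist have "dep_cycle n f c" by (simp add: dep_cycle_def c_def)
  moreover have "c ! 0 = j" by (simp add: c_def)
  ultimately show thesis using last that by blast
qed

lemma gamma_const_if_on_cycle:
  assumes pvf: "poly_vector_field n f"
    and cyc: "\<forall>c. dep_cycle n f c \<longrightarrow> (\<exists>w. \<forall>x\<in>Rn n. cycle_weight f c x = w)"
    and "dep_edge n f i j" "(dep_edge n f)\<^sup>*\<^sup>* j i" "x \<in> Rn n" "y \<in> Rn n"
  shows "gamma f i j x = gamma f i j y"
proof -
  obtain c where c: "dep_cycle n f c" "c ! 0 = j" "c ! (length c - 1) = i"
    using dep_cycle_through_edge assms(3,4) by blast
  define k where "k = length c"
  have k: "0 < k" using c(1) by (simp add: dep_cycle_def k_def)
  define g where "g s = gamma f (c ! s) (c ! ((s + 1) mod k))" for s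
  obtain w where w: "\<And>x. x \<in> Rn n \<Longrightarrow> (\<Prod>s\<in>{..<k}. g s x) = w"
    using cyc c(1) by (auto simp: cycle_weight_def g_def k_def)
  have "poly_fun n (g s) \<and> (\<exists>x\<in>Rn n. g s x \<noteq> 0)" if "s \<in> {..<k}" for s
  proof -
    have edge: "dep_edge n f (c ! s) (c ! ((s + 1) mod k))"
      using c(1) that by (simp add: dep_cycle_def k_def)
    then have "poly_fun n (\<lambda>x. f x (c ! ((s + 1) mod k)))"
      using pvf by (simp add: poly_vector_field_def dep_edge_def)
    with edge show ?thesis unfolding g_def by (simp add: gamma_poly_fun(1) dep_edge_def)
  qed
  then have "g (k - 1) x = g (k - 1) y"
    using poly_fun_prod_factor_const[of "{..<k}" "k - 1" n g w x y] w assms(5,6) k by simp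
  moreover have "(k - 1 + 1) mod k = 0" using k by simp
  ultimately show ?thesis using c(2,3) by (simp add: g_def k_def)
qed

definition upstream :: "nat \<Rightarrow> ((nat \<Rightarrow> real) \<Rightarrow> (nat \<Rightarrow> real)) \<Rightarrow> nat \<Rightarrow> nat set" where
  "upstream n f j = {i. (dep_edge n f)\<^sup>*\<^sup>* i j \<and> \<not> (dep_edge n f)\<^sup>*\<^sup>* j i}"

lemma upstream_subset: "upstream n f j \<subseteq> {..<n}"
proof
  fix i assume "i \<in> upstream n f j"
  then have "(dep_edge n f)\<^sup>*\<^sup>* i j" "i \<noteq> j" by (auto simp: upstream_def)
  then obtain k where "dep_edge n f i k" by (cases rule: converse_rtranclpE) auto
  then show "i \<in> {..<n}" by (simp add: dep_edge_def)
qed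

lemma finite_upstream: "finite (upstream n f j)"
  by (rule finite_subset[OF upstream_subset]) simp

lemma card_upstream_less:
  assumes "i \<in> upstream n f j"
  shows "card (upstream n f i) < card (upstream n f j)"
proof (rule psubset_card_mono[OF finite_upstream])
  have "upstream n f i \<subseteq> upstream n f j"
  proof
    fix k assume "k \<in> upstream n f i"
    then have ki: "(dep_edge n f)\<^sup>*\<^sup>* k i" by (simp add: upstream_def)
    have ij: "(dep_edge n f)\<^sup>*\<^sup>* i j" and ji: "\<not> (dep_edge n f)\<^sup>*\<^sup>* j i"
      using assms by (simp_all add: upstream_def)
    have "(dep_edge n f)\<^sup>*\<^sup>* k j" using ki ij by (rule rtranclp_trans)
    moreover have "\<not> (dep_edge n f)\<^sup>*\<^sup>* j k"
      using ji rtranclp_trans[of "dep_edge n f" j k i] ki by blast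
    ultimately show "k \<in> upstream n f j" by (simp add: upstream_def)
  qed
  moreover have "i \<in> upstream n f j - upstream n f i" using assms by (auto simp: upstream_def)
  ultimately show "upstream n f i \<subset> upstream n f j" by blast
qed

lemma upstream_eq_if_edge:
  assumes "dep_edge n f i j" "i \<notin> upstream n f j"
  shows "upstream n f i = upstream n f j"
proof -
  have "(dep_edge n f)\<^sup>*\<^sup>* i j" "(dep_edge n f)\<^sup>*\<^sup>* j i"
    using assms by (auto simp: upstream_def)
  then have "(dep_edge n f)\<^sup>*\<^sup>* k i \<longleftrightarrow> (dep_edge n f)\<^sup>*\<^sup>* k j"
    and "(dep_edge n f)\<^sup>*\<^sup>* i k \<longleftrightarrow> (dep_edge n f)\<^sup>*\<^sup>* j k" for k
    by (metis rtranclp_trans)+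
  then show ?thesis by (simp add: upstream_def)
qed

lemma gamma_const_off_upstream:
  assumes "poly_vector_field n f" "\<forall>c. dep_cycle n f c \<longrightarrow> (\<exists>w. \<forall>x\<in>Rn n. cycle_weight f c x = w)"
    and "i < n" "j < n" "i \<notin> upstream n f j" "x \<in> Rn n" "y \<in> Rn n"
  shows "gamma f i j x = gamma f i j y"
proof (cases "dep_edge n f i j")
  case True
  with assms(5) have "(dep_edge n f)\<^sup>*\<^sup>* j i" by (auto simp: upstream_def)
  with True show ?thesis by (rule gamma_const_if_on_cycle[OF assms(1,2) _ _ assms(6,7)])
next
  case False
  with assms show ?thesis by (auto simp: dep_edge_def)
qed

lemma eq_if_partials_vanish:
  assumes "finite F" "x \<in> Rn n"
    and "\<And>i y s. i \<in> F \<Longrightarrow> y \<in> Rn n \<Longrightarrow> ((\<lambda>s. h (y(i := s))) has_real_derivative 0) (at s)"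
  shows "h x = h (\<lambda>k. if k \<in> F then 0 else x k)"
  using assms
proof (induction F rule: finite_induct)
  case empty
  then show ?case by simp
next
  case (insert i F)
  define y where "y k = (if k \<in> F then 0 else x k)" for k
  have y: "y \<in> Rn n" using insert.prems(1) by (auto simp: Rn_def y_def)
  have "h x = h y" unfolding y_def using insert.prems by (intro insert.IH) auto
  also have "\<dots> = h (y(i := y i))" by simp
  also have "\<dots> = h (y(i := 0))"
    using DERIV_isconst_all[of "\<lambda>s. h (y(i := s))" "y i" 0] insert.prems(2) y by blast
  also have "y(i := 0) = (\<lambda>k. if k \<in> insert i F then 0 else x k)" by (auto simp: y_def)
  finally show ?case .
qed

definition restrict_coords :: "nat set \<Rightarrow> (nat \<Rightarrow> real) \<Rightarrow> nat \<Rightarrow> real" where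
  "restrict_coords U x = (\<lambda>k. if k \<in> U then x k else 0)"

lemma field_component_split:
  assumes pvf: "poly_vector_field n f"
    and cyc: "\<forall>c. dep_cycle n f c \<longrightarrow> (\<exists>w. \<forall>x\<in>Rn n. cycle_weight f c x = w)"
    and j: "j < n" and x: "x \<in> Rn n"
  shows "f x j = (\<Sum>i | i < n \<and> i \<notin> upstream n f j. gamma f i j (\<lambda>_. 0) * x i)
             + f (restrict_coords (upstream n f j) x) j"
proof -
  define L where "L = {i. i < n \<and> i \<notin> upstream n f j}"
  define a where "a i = gamma f i j (\<lambda>_. 0)" for i
  define h where "h x = f x j - (\<Sum>i\<in>L. a i * x i)" for x
  have L: "finite L" by (simp add: L_def)
  have fj: "poly_fun n (\<lambda>x. f x j)" using pvf j by (simp add: poly_vector_field_def)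
  have "((\<lambda>s. h (y(i := s))) has_real_derivative 0) (at s)" if i: "i \<in> L" and y: "y \<in> Rn n" for i y s
  proof -
    have "y(i := s) \<in> Rn n" "(\<lambda>_. 0) \<in> Rn n" using y i by (auto simp: Rn_def L_def)
    with i have "gamma f i j (y(i := s)) = a i"
      unfolding a_def L_def by (auto intro: gamma_const_off_upstream[OF pvf cyc _ j])
    with gamma_poly_fun(2)[of n f j, OF fj]
    have "((\<lambda>s. f (y(i := s)) j) has_real_derivative a i) (at s)" by metis
    moreover have "(\<Sum>k\<in>L. a k * (y(i := s)) k) = a i * s + (\<Sum>k\<in>L - {i}. a k * y k)" for s
      using sum.remove[OF L i, of "\<lambda>k. a k * (y(i := s)) k"] by simp
    then have "((\<lambda>s. \<Sum>k\<in>L. a k * (y(i := s)) k) has_real_derivative a i) (at s)"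
      by (auto intro!: derivative_eq_intros)
    ultimately have "((\<lambda>s. h (y(i := s))) has_real_derivative a i - a i) (at s)"
      unfolding h_def by (rule DERIV_diff)
    then show ?thesis by simp
  qed
  then have "h x = h (\<lambda>k. if k \<in> L then 0 else x k)" by (intro eq_if_partials_vanish[OF L x])
  also have "(\<lambda>k. if k \<in> L then 0 else x k) = restrict_coords (upstream n f j) x"
    using x by (auto simp: restrict_coords_def L_def Rn_def)
  also have "h (restrict_coords (upstream n f j) x) = f (restrict_coords (upstream n f j) x) j"
    by (auto simp: h_def L_def restrict_coords_def intro!: sum.neutral)
  finally show ?thesis by (simp add: h_def L_def a_def)
qed

section \<open>Weighted degrees\<close>

inductive weighted_poly :: "nat \<Rightarrow> (nat \<Rightarrow> nat) \<Rightarrow> nat \<Rightarrow> ((nat \<Rightarrow> real) \<Rightarrow> real) \<Rightarrow> bool"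
  for n \<omega> where
  const: "weighted_poly n \<omega> d (\<lambda>x. c)"
| var: "i < n \<Longrightarrow> \<omega> i \<le> d \<Longrightarrow> weighted_poly n \<omega> d (\<lambda>x. x i)"
| add: "weighted_poly n \<omega> d p \<Longrightarrow> weighted_poly n \<omega> d q \<Longrightarrow> weighted_poly n \<omega> d (\<lambda>x. p x + q x)"
| mult: "weighted_poly n \<omega> d1 p \<Longrightarrow> weighted_poly n \<omega> d2 q \<Longrightarrow>
    weighted_poly n \<omega> (d1 + d2) (\<lambda>x. p x * q x)"
| mono: "weighted_poly n \<omega> d p \<Longrightarrow> d \<le> d' \<Longrightarrow> weighted_poly n \<omega> d' p"

lemma weighted_poly_sum:
  assumes "finite I" "\<And>i. i \<in> I \<Longrightarrow> weighted_poly n \<omega> d (q i)"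
  shows "weighted_poly n \<omega> d (\<lambda>x. \<Sum>i\<in>I. q i x)"
  using assms by (induction I rule: finite_induct) (auto intro: weighted_poly.const weighted_poly.add)

lemma weighted_poly_prod:
  assumes "finite I" "\<And>i. i \<in> I \<Longrightarrow> weighted_poly n \<omega> (d i) (q i)"
  shows "weighted_poly n \<omega> (\<Sum>i\<in>I. d i) (\<lambda>x. \<Prod>i\<in>I. q i x)"
  using assms
proof (induction I rule: finite_induct)
  case empty
  show ?case using weighted_poly.const[of n \<omega> 0 1] by simp
next
  case (insert i I)
  then have "weighted_poly n \<omega> (d i + (\<Sum>i\<in>I. d i)) (\<lambda>x. q i x * (\<Prod>i\<in>I. q i x))"
    by (intro weighted_poly.mult) auto
  with insert.hyps show ?case by simp
qed

lemma weighted_poly_power: "i < n \<Longrightarrow> weighted_poly n \<omega> (\<omega> i * k) (\<lambda>x. x i ^ k)"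
proof (induction k)
  case 0
  show ?case using weighted_poly.const[of n \<omega> 0 1] by simp
next
  case (Suc k)
  then have "weighted_poly n \<omega> (\<omega> i + \<omega> i * k) (\<lambda>x. x i * x i ^ k)"
    by (intro weighted_poly.mult weighted_poly.var) auto
  then show ?case by simp
qed

lemma poly_fun_restrict_weighted:
  assumes "poly_fun n p"
  shows "\<exists>d. \<forall>\<omega> U M. (\<forall>i\<in>U. i < n \<longrightarrow> \<omega> i \<le> M) \<longrightarrow>
           weighted_poly n \<omega> (d * M) (\<lambda>x. p (restrict_coords U x))"
  using assms
proof induction
  case (const c)
  show ?case by (auto intro: weighted_poly.const)
next
  case (var i)
  have "weighted_poly n \<omega> M (\<lambda>x. restrict_coords U x i)" if "\<forall>i\<in>U. i < n \<longrightarrow> \<omega> i \<le> M" for \<omega> U M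
  proof (cases "i \<in> U")
    case True
    with that var show ?thesis by (auto simp: restrict_coords_def intro: weighted_poly.var)
  next
    case False
    then show ?thesis by (simp add: restrict_coords_def weighted_poly.const)
  qed
  then show ?case by (intro exI[of _ 1]) simp
next
  case (add p q)
  then obtain d1 d2 where
    "\<forall>\<omega> U M. (\<forall>i\<in>U. i < n \<longrightarrow> \<omega> i \<le> M) \<longrightarrow> weighted_poly n \<omega> (d1 * M) (\<lambda>x. p (restrict_coords U x))"
    "\<forall>\<omega> U M. (\<forall>i\<in>U. i < n \<longrightarrow> \<omega> i \<le> M) \<longrightarrow> weighted_poly n \<omega> (d2 * M) (\<lambda>x. q (restrict_coords U x))"
    by blast
  then show ?case
    by (intro exI[of _ "max d1 d2"] allI impI weighted_poly.add)
      (meson weighted_poly.mono max.cobounded1 max.cobounded2 mult_le_mono1)+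
next
  case (mult p q)
  then obtain d1 d2 where
    "\<forall>\<omega> U M. (\<forall>i\<in>U. i < n \<longrightarrow> \<omega> i \<le> M) \<longrightarrow> weighted_poly n \<omega> (d1 * M) (\<lambda>x. p (restrict_coords U x))"
    "\<forall>\<omega> U M. (\<forall>i\<in>U. i < n \<longrightarrow> \<omega> i \<le> M) \<longrightarrow> weighted_poly n \<omega> (d2 * M) (\<lambda>x. q (restrict_coords U x))"
    by blast
  then show ?case
    by (intro exI[of _ "d1 + d2"] allI impI) (auto simp: add_mult_distrib intro: weighted_poly.mult)
qed

definition dep_weight :: "nat \<Rightarrow> ((nat \<Rightarrow> real) \<Rightarrow> (nat \<Rightarrow> real)) \<Rightarrow> nat \<Rightarrow> nat \<Rightarrow> nat" where
  "dep_weight n f B i = B ^ card (upstream n f i)"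

lemma weighted_poly_linear_part:
  assumes "j < n"
  shows "weighted_poly n (dep_weight n f B) (dep_weight n f B j)
           (\<lambda>x. \<Sum>i | i < n \<and> i \<notin> upstream n f j. gamma f i j (\<lambda>_. 0) * x i)"
proof (rule weighted_poly_sum)
  fix i assume i: "i \<in> {i. i < n \<and> i \<notin> upstream n f j}"
  show "weighted_poly n (dep_weight n f B) (dep_weight n f B j) (\<lambda>x. gamma f i j (\<lambda>_. 0) * x i)"
  proof (cases "gamma f i j (\<lambda>_. 0) = 0")
    case True
    then show ?thesis by (simp add: weighted_poly.const)
  next
    case False
    with i assms have "dep_edge n f i j" by (auto simp: dep_edge_def Rn_def)
    with i have "dep_weight n f B i = dep_weight n f B j"
      by (simp add: dep_weight_def upstream_eq_if_edge)
    with i have "weighted_poly n (dep_weight n f B) (0 + dep_weight n f B j)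
        (\<lambda>x. gamma f i j (\<lambda>_. 0) * x i)"
      by (intro weighted_poly.mult weighted_poly.const weighted_poly.var) auto
    then show ?thesis by simp
  qed
qed simp

text \<open>Strictly upstream nodes carry weight at most B^(c-1), where c is the number of nodes upstream
  of j, so a polynomial of degree at most B in them has weighted degree at most B^c.\<close>

lemma weighted_poly_upstream_part:
  assumes "2 \<le> B" "d \<le> B"
    and "\<forall>\<omega> U M. (\<forall>i\<in>U. i < n \<longrightarrow> \<omega> i \<le> M) \<longrightarrow> weighted_poly n \<omega> (d * M) (\<lambda>x. p (restrict_coords U x))"
  shows "weighted_poly n (dep_weight n f B) (dep_weight n f B j)
           (\<lambda>x. p (restrict_coords (upstream n f j) x))"
proof -
  define c where "c = card (upstream n f j)"
  define M where "M = (if c = 0 then 0 else B ^ (c - 1))"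
  have "dep_weight n f B i \<le> M" if "i \<in> upstream n f j" for i
  proof -
    have "card (upstream n f i) < c" using card_upstream_less[OF that] by (simp add: c_def)
    moreover from this have "B ^ card (upstream n f i) \<le> B ^ (c - 1)"
      using assms(1) by (intro power_increasing) auto
    ultimately show ?thesis by (simp add: dep_weight_def M_def)
  qed
  with assms(3) have "weighted_poly n (dep_weight n f B) (d * M) (\<lambda>x. p (restrict_coords (upstream n f j) x))"
    by blast
  moreover have "d * M \<le> dep_weight n f B j"
  proof (cases "c = 0")
    case False
    have "d * B ^ (c - 1) \<le> B * B ^ (c - 1)" using assms(2) by simp
    also have "\<dots> = B ^ c" using False by (cases c) auto
    finally show ?thesis using False by (simp add: M_def dep_weight_def c_def)
  qed (simp add: M_def)
  ultimately show ?thesis by (rule weighted_poly.mono)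
qed

lemma field_weighted:
  assumes pvf: "poly_vector_field n f"
    and cyc: "\<forall>c. dep_cycle n f c \<longrightarrow> (\<exists>w. \<forall>x\<in>Rn n. cycle_weight f c x = w)"
  obtains \<omega> g where "\<And>i. 1 \<le> \<omega> i" "\<And>j. j < n \<Longrightarrow> weighted_poly n \<omega> (\<omega> j) (g j)"
    "\<And>j x. j < n \<Longrightarrow> x \<in> Rn n \<Longrightarrow> f x j = g j x"
proof -
  have "\<exists>d. j < n \<longrightarrow> (\<forall>\<omega> U M. (\<forall>i\<in>U. i < n \<longrightarrow> \<omega> i \<le> M) \<longrightarrow>
          weighted_poly n \<omega> (d * M) (\<lambda>x. f (restrict_coords U x) j))" for j
    using poly_fun_restrict_weighted[of n "\<lambda>x. f x j"] pvf unfolding poly_vector_field_def by blast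
  then obtain D where D: "\<And>j. j < n \<Longrightarrow> \<forall>\<omega> U M. (\<forall>i\<in>U. i < n \<longrightarrow> \<omega> i \<le> M) \<longrightarrow>
          weighted_poly n \<omega> (D j * M) (\<lambda>x. f (restrict_coords U x) j)"
    by metis
  define B where "B = 2 + (\<Sum>j<n. D j)"
  define g where "g j x = (\<Sum>i | i < n \<and> i \<notin> upstream n f j. gamma f i j (\<lambda>_. 0) * x i)
             + f (restrict_coords (upstream n f j) x) j" for j x
  show thesis
  proof (rule that)
    show "1 \<le> dep_weight n f B i" for i by (simp add: dep_weight_def B_def)
    show "weighted_poly n (dep_weight n f B) (dep_weight n f B j) (g j)" if "j < n" for j
    proof -
      have "D j \<le> B" using that member_le_sum[of j "{..<n}" D] by (simp add: B_def)
      with D[OF that] show ?thesis unfolding g_def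
        by (intro weighted_poly.add weighted_poly_linear_part weighted_poly_upstream_part that)
          (simp_all add: B_def)
    qed
    show "f x j = g j x" if "j < n" "x \<in> Rn n" for j x
      using field_component_split[OF pvf cyc that] by (simp add: g_def)
  qed
qed

section \<open>Spans of monomials\<close>

definition in_span :: "('a \<Rightarrow> real) set \<Rightarrow> ('a \<Rightarrow> real) \<Rightarrow> bool" where
  "in_span S q \<longleftrightarrow> (\<exists>c. \<forall>x. q x = (\<Sum>g\<in>S. c g * g x))"

lemma in_span_base:
  assumes "finite S" "g \<in> S"
  shows "in_span S g"
  unfolding in_span_def
proof (intro exI[of _ "\<lambda>h. if h = g then 1 else 0"] allI)
  fix x
  have "(\<Sum>h\<in>S. (if h = g then 1 else 0) * h x) = (\<Sum>h\<in>S. if h = g then g x else 0)"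
    by (rule sum.cong) auto
  with assms show "g x = (\<Sum>h\<in>S. (if h = g then 1 else 0) * h x)" by simp
qed

lemma in_span_zero: "in_span S (\<lambda>x. 0)"
  unfolding in_span_def by (intro exI[of _ "\<lambda>h. 0"]) simp

lemma in_span_add:
  assumes "in_span S p" "in_span S q"
  shows "in_span S (\<lambda>x. p x + q x)"
proof -
  obtain c d where c: "\<And>x. p x = (\<Sum>g\<in>S. c g * g x)" and d: "\<And>x. q x = (\<Sum>g\<in>S. d g * g x)"
    using assms by (auto simp: in_span_def)
  have "p x + q x = (\<Sum>g\<in>S. (c g + d g) * g x)" for x
    by (simp add: c d distrib_right sum.distrib)
  then show ?thesis unfolding in_span_def by (intro exI[of _ "\<lambda>g. c g + d g"]) blast
qed

lemma in_span_scale: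
  assumes "in_span S p"
  shows "in_span S (\<lambda>x. a * p x)"
proof -
  obtain c where c: "\<And>x. p x = (\<Sum>g\<in>S. c g * g x)" using assms by (auto simp: in_span_def)
  have "a * p x = (\<Sum>g\<in>S. (a * c g) * g x)" for x
    by (simp add: c sum_distrib_left mult.assoc)
  then show ?thesis unfolding in_span_def by (intro exI[of _ "\<lambda>g. a * c g"]) blast
qed

lemma in_span_sum: "finite I \<Longrightarrow> (\<And>i. i \<in> I \<Longrightarrow> in_span S (q i)) \<Longrightarrow> in_span S (\<lambda>x. \<Sum>i\<in>I. q i x)"
  by (induction I rule: finite_induct) (auto intro: in_span_zero in_span_add)

lemma in_span_mono:
  assumes "in_span S p" "S \<subseteq> T" "finite T"
  shows "in_span T p"
proof -
  obtain c where c: "\<And>x. p x = (\<Sum>g\<in>S. c g * g x)" using assms(1) by (auto simp: in_span_def)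
  have "p x = (\<Sum>g\<in>T. (if g \<in> S then c g else 0) * g x)" for x
  proof -
    have "(\<Sum>g\<in>T. (if g \<in> S then c g else 0) * g x) = (\<Sum>g\<in>S. (if g \<in> S then c g else 0) * g x)"
      using assms(2,3) by (intro sum.mono_neutral_right) auto
    also have "\<dots> = p x" unfolding c by (rule sum.cong) auto
    finally show ?thesis ..
  qed
  then show ?thesis unfolding in_span_def by (intro exI[of _ "\<lambda>g. if g \<in> S then c g else 0"]) blast
qed

lemma in_span_mult:
  assumes "in_span S1 p" "in_span S2 q" "finite S1" "finite S2"
    and "\<And>g h. g \<in> S1 \<Longrightarrow> h \<in> S2 \<Longrightarrow> in_span T (\<lambda>x. g x * h x)"
  shows "in_span T (\<lambda>x. p x * q x)"
proof -
  obtain c d where c: "\<And>x. p x = (\<Sum>g\<in>S1. c g * g x)" and d: "\<And>x. q x = (\<Sum>h\<in>S2. d h * h x)"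
    using assms(1,2) unfolding in_span_def by blast
  have eq: "p x * q x = (\<Sum>g\<in>S1. \<Sum>h\<in>S2. (c g * d h) * (g x * h x))" for x
    unfolding c d sum_product by (intro sum.cong refl) (simp add: mult_ac)
  have "in_span T (\<lambda>x. \<Sum>g\<in>S1. \<Sum>h\<in>S2. (c g * d h) * (g x * h x))"
    using assms(3-5) by (intro in_span_sum in_span_scale)
  then show ?thesis unfolding eq .
qed

lemma in_span_reindex:
  assumes "in_span S q" "bij_betw b {..<N} S"
  shows "\<exists>c. \<forall>x. q x = (\<Sum>l<N. c l * b l x)"
proof -
  obtain c where c: "\<And>x. q x = (\<Sum>g\<in>S. c g * g x)" using assms(1) by (auto simp: in_span_def)
  have "(\<Sum>g\<in>S. c g * g x) = (\<Sum>l<N. c (b l) * b l x)" for x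
    using sum.reindex_bij_betw[OF assms(2), of "\<lambda>g. c g * g x"] by simp
  with c show ?thesis by (intro exI[of _ "\<lambda>l. c (b l)"]) simp
qed

definition monomial :: "nat \<Rightarrow> (nat \<Rightarrow> nat) \<Rightarrow> (nat \<Rightarrow> real) \<Rightarrow> real" where
  "monomial n \<alpha> x = (\<Prod>i<n. x i ^ \<alpha> i)"

definition weighted_degree :: "nat \<Rightarrow> (nat \<Rightarrow> nat) \<Rightarrow> (nat \<Rightarrow> nat) \<Rightarrow> nat" where
  "weighted_degree n \<omega> \<alpha> = (\<Sum>i<n. \<omega> i * \<alpha> i)"

definition exponents :: "nat \<Rightarrow> (nat \<Rightarrow> nat) \<Rightarrow> nat \<Rightarrow> (nat \<Rightarrow> nat) set" where
  "exponents n \<omega> d = {\<alpha>. (\<forall>k\<ge>n. \<alpha> k = 0) \<and> weighted_degree n \<omega> \<alpha> \<le> d}"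

definition monomials :: "nat \<Rightarrow> (nat \<Rightarrow> nat) \<Rightarrow> nat \<Rightarrow> ((nat \<Rightarrow> real) \<Rightarrow> real) set" where
  "monomials n \<omega> d = monomial n ` exponents n \<omega> d"

lemma monomial_add: "monomial n (\<lambda>k. \<alpha> k + \<beta> k) x = monomial n \<alpha> x * monomial n \<beta> x"
  by (simp add: monomial_def power_add prod.distrib)

lemma weighted_degree_add:
  "weighted_degree n \<omega> (\<lambda>k. \<alpha> k + \<beta> k) = weighted_degree n \<omega> \<alpha> + weighted_degree n \<omega> \<beta>"
  by (simp add: weighted_degree_def distrib_left sum.distrib)

lemma finite_exponents:
  assumes "\<forall>i. 1 \<le> \<omega> i"
  shows "finite (exponents n \<omega> d)"
proof (rule finite_subset)
  show "exponents n \<omega> d \<subseteq> {\<alpha>. \<forall>k. (k \<in> {..<n} \<longrightarrow> \<alpha> k \<in> {..d}) \<and> (k \<notin> {..<n} \<longrightarrow> \<alpha> k = 0)}"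
  proof (intro subsetI CollectI allI conjI impI)
    fix \<alpha> k assume \<alpha>: "\<alpha> \<in> exponents n \<omega> d" and "k \<in> {..<n}"
    then have "\<alpha> k \<le> \<omega> k * \<alpha> k" using assms by simp
    also have "\<dots> \<le> weighted_degree n \<omega> \<alpha>"
      unfolding weighted_degree_def using \<open>k \<in> {..<n}\<close> by (rule member_le_sum) simp_all
    finally show "\<alpha> k \<in> {..d}" using \<alpha> by (simp add: exponents_def)
  qed (simp add: exponents_def)
qed (rule finite_set_of_finite_funs; simp)

lemma finite_monomials: "\<forall>i. 1 \<le> \<omega> i \<Longrightarrow> finite (monomials n \<omega> d)"
  unfolding monomials_def by (intro finite_imageI finite_exponents)

lemma monomial_unit:
  assumes "i < n"
  shows "monomial n (\<lambda>k. if k = i then 1 else 0) = (\<lambda>x. x i)"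
proof
  fix x :: "nat \<Rightarrow> real"
  have "(\<Prod>k<n. x k ^ (if k = i then 1 else 0)) = (\<Prod>k<n. if k = i then x k else 1)"
    by (rule prod.cong) auto
  with assms show "monomial n (\<lambda>k. if k = i then 1 else 0) x = x i" by (simp add: monomial_def)
qed

lemma unit_in_exponents:
  assumes "i < n" "\<omega> i \<le> d"
  shows "(\<lambda>k. if k = i then 1 else 0) \<in> exponents n \<omega> d"
proof -
  have "(\<Sum>k<n. \<omega> k * (if k = i then 1 else 0)) = (\<Sum>k<n. if k = i then \<omega> k else 0)"
    by (rule sum.cong) auto
  with assms show ?thesis by (simp add: exponents_def weighted_degree_def)
qed

lemma coordinate_in_monomials:
  assumes "i < n" "\<omega> i \<le> d"
  shows "(\<lambda>x. x i) \<in> monomials n \<omega> d"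
proof -
  have "monomial n (\<lambda>k. if k = i then 1 else 0) \<in> monomials n \<omega> d"
    unfolding monomials_def using unit_in_exponents[of i n \<omega> d, OF assms] by (rule imageI)
  then show ?thesis by (simp only: monomial_unit[of i n, OF assms(1)])
qed

lemma weighted_poly_in_span_monomials:
  assumes "weighted_poly n \<omega> d q" "\<forall>i. 1 \<le> \<omega> i"
  shows "in_span (monomials n \<omega> d) q"
  using assms(1)
proof induction
  case (const d c)
  have "(\<lambda>_. 0) \<in> exponents n \<omega> d" by (simp add: exponents_def weighted_degree_def)
  then have "monomial n (\<lambda>_. 0) \<in> monomials n \<omega> d" unfolding monomials_def by (rule imageI)
  with finite_monomials[OF assms(2)] have "in_span (monomials n \<omega> d) (monomial n (\<lambda>_. 0))"
    by (rule in_span_base)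
  from in_span_scale[OF this, of c] show ?case by (simp add: monomial_def)
next
  case (var i d)
  with finite_monomials[OF assms(2)] show ?case
    by (intro in_span_base coordinate_in_monomials)
next
  case (add d p q)
  show ?case by (rule in_span_add[OF add.IH])
next
  case (mult d1 p d2 q)
  show ?case
  proof (rule in_span_mult[OF mult.IH finite_monomials finite_monomials])
    fix g h assume "g \<in> monomials n \<omega> d1" "h \<in> monomials n \<omega> d2"
    then obtain \<alpha> \<beta> where "\<alpha> \<in> exponents n \<omega> d1" "\<beta> \<in> exponents n \<omega> d2"
      and gh: "g = monomial n \<alpha>" "h = monomial n \<beta>"
      unfolding monomials_def by blast
    then have "(\<lambda>k. \<alpha> k + \<beta> k) \<in> exponents n \<omega> (d1 + d2)"
      by (simp add: exponents_def weighted_degree_add)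
    then have "monomial n (\<lambda>k. \<alpha> k + \<beta> k) \<in> monomials n \<omega> (d1 + d2)"
      unfolding monomials_def by (rule imageI)
    moreover have "monomial n (\<lambda>k. \<alpha> k + \<beta> k) = (\<lambda>x. g x * h x)"
      unfolding gh by (rule ext) (rule monomial_add)
    ultimately show "in_span (monomials n \<omega> (d1 + d2)) (\<lambda>x. g x * h x)"
      using finite_monomials[OF assms(2)] by (simp add: in_span_base)
  qed (fact assms)+
next
  case (mono d p d')
  then have "exponents n \<omega> d \<subseteq> exponents n \<omega> d'" by (auto simp: exponents_def)
  then have "monomials n \<omega> d \<subseteq> monomials n \<omega> d'" unfolding monomials_def by (rule image_mono)
  from mono.IH this finite_monomials[OF assms(2)] show ?case by (rule in_span_mono)
qed

lemma weighted_poly_monomial: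
  assumes "\<alpha> \<in> exponents n \<omega> d"
  shows "weighted_poly n \<omega> d (monomial n \<alpha>)"
proof -
  have "weighted_poly n \<omega> (\<Sum>i<n. \<omega> i * \<alpha> i) (\<lambda>x. \<Prod>i<n. x i ^ \<alpha> i)"
    by (rule weighted_poly_prod) (auto intro: weighted_poly_power)
  with assms show ?thesis
    by (auto simp: exponents_def weighted_degree_def monomial_def[abs_def] intro: weighted_poly.mono)
qed

text \<open>Substituting for each variable x_j a polynomial g_j of weighted degree at most its weight does
  not increase weighted degrees; hence differentiation along the flow of g preserves them.\<close>

lemma weighted_poly_lie_derivative:
  assumes "weighted_poly n \<omega> d q" "\<And>j. j < n \<Longrightarrow> weighted_poly n \<omega> (\<omega> j) (g j)"
  shows "\<exists>q'. weighted_poly n \<omega> d q' \<and>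
    (\<forall>x t. (\<forall>i<n. ((\<lambda>s. x s i) has_real_derivative g i (x t)) (at t)) \<longrightarrow>
       ((\<lambda>s. q (x s)) has_real_derivative q' (x t)) (at t))"
  using assms(1)
proof induction
  case (const d c)
  show ?case by (intro exI[of _ "\<lambda>x. 0"] conjI weighted_poly.const) auto
next
  case (var i d)
  then have "weighted_poly n \<omega> d (g i)" using assms(2) by (blast intro: weighted_poly.mono)
  with var.hyps show ?case by (intro exI[of _ "g i"]) auto
next
  case (add d p q)
  then obtain p' q' where "weighted_poly n \<omega> d p'" "weighted_poly n \<omega> d q'"
    and "\<forall>x t. (\<forall>i<n. ((\<lambda>s. x s i) has_real_derivative g i (x t)) (at t)) \<longrightarrow>
       ((\<lambda>s. p (x s)) has_real_derivative p' (x t)) (at t)"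
    and "\<forall>x t. (\<forall>i<n. ((\<lambda>s. x s i) has_real_derivative g i (x t)) (at t)) \<longrightarrow>
       ((\<lambda>s. q (x s)) has_real_derivative q' (x t)) (at t)"
    by blast
  then show ?case
    by (intro exI[of _ "\<lambda>x. p' x + q' x"] conjI allI impI weighted_poly.add DERIV_add) simp_all
next
  case (mult d1 p d2 q)
  then obtain p' q' where "weighted_poly n \<omega> d1 p'" "weighted_poly n \<omega> d2 q'"
    and "\<forall>x t. (\<forall>i<n. ((\<lambda>s. x s i) has_real_derivative g i (x t)) (at t)) \<longrightarrow>
       ((\<lambda>s. p (x s)) has_real_derivative p' (x t)) (at t)"
    and "\<forall>x t. (\<forall>i<n. ((\<lambda>s. x s i) has_real_derivative g i (x t)) (at t)) \<longrightarrow>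
       ((\<lambda>s. q (x s)) has_real_derivative q' (x t)) (at t)"
    by blast
  note d = this
  show ?case
  proof (intro exI[of _ "\<lambda>x. p' x * q x + q' x * p x"] conjI allI impI)
    have "weighted_poly n \<omega> (d1 + d2) (\<lambda>x. p' x * q x)" "weighted_poly n \<omega> (d2 + d1) (\<lambda>x. q' x * p x)"
      using d mult.hyps by (auto intro: weighted_poly.mult)
    then show "weighted_poly n \<omega> (d1 + d2) (\<lambda>x. p' x * q x + q' x * p x)"
      by (simp add: add.commute weighted_poly.add)
    fix x t assume "\<forall>i<n. ((\<lambda>s. x s i) has_real_derivative g i (x t)) (at t)"
    with d show "((\<lambda>s. p (x s) * q (x s)) has_real_derivative p' (x t) * q (x t) + q' (x t) * p (x t)) (at t)"
      by (intro DERIV_mult) simp_all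
  qed
next
  case (mono d p d')
  then show ?case by (blast intro: weighted_poly.mono)
qed

section \<open>Linear differential equations\<close>

lemma gronwall_vanishing:
  fixes E E' :: "real \<Rightarrow> real"
  assumes "a < 0" "0 < b" "E 0 = 0" "\<And>t. 0 \<le> E t"
    and deriv: "\<And>t. t \<in> {a<..<b} \<Longrightarrow> (E has_real_derivative E' t) (at t)"
    and bound: "\<And>t. \<bar>E' t\<bar> \<le> K * E t"
    and t: "t \<in> {a<..<b}"
  shows "E t = 0"
proof -
  have "E t \<le> 0"
  proof (cases "0 \<le> t")
    case True
    define F where "F s = E s * exp (- (K * s))" for s
    have "F t \<le> F 0"
    proof (rule DERIV_nonpos_imp_nonincreasing[of 0 t F, OF True])
      fix s assume "0 \<le> s" "s \<le> t"
      with t assms(1) have "s \<in> {a<..<b}" by auto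
      then have "(F has_real_derivative exp (- (K * s)) * (E' s - K * E s)) (at s)"
        unfolding F_def by (auto intro!: derivative_eq_intros deriv simp: algebra_simps)
      moreover have "exp (- (K * s)) * (E' s - K * E s) \<le> 0"
        using bound[of s] by (intro mult_nonneg_nonpos) auto
      ultimately show "\<exists>y. (F has_real_derivative y) (at s) \<and> y \<le> 0" by blast
    qed
    then show ?thesis using assms(3) by (simp add: F_def mult_le_0_iff)
  next
    case False
    define G where "G s = E s * exp (K * s)" for s
    have "G t \<le> G 0"
    proof (rule DERIV_nonneg_imp_nondecreasing[of t 0 G])
      show "t \<le> 0" using False by simp
      fix s assume "t \<le> s" "s \<le> 0"
      with t assms(2) have "s \<in> {a<..<b}" by auto
      then have "(G has_real_derivative exp (K * s) * (E' s + K * E s)) (at s)"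
        unfolding G_def by (auto intro!: derivative_eq_intros deriv simp: algebra_simps)
      moreover have "0 \<le> exp (K * s) * (E' s + K * E s)"
        using bound[of s] by (intro mult_nonneg_nonneg) auto
      ultimately show "\<exists>y. (G has_real_derivative y) (at s) \<and> 0 \<le> y" by blast
    qed
    then show ?thesis using assms(3) by (simp add: G_def mult_le_0_iff)
  qed
  with assms(4)[of t] show ?thesis by simp
qed

lemma abs_quadratic_form_le:
  fixes A :: "nat \<Rightarrow> nat \<Rightarrow> real"
  shows "\<bar>\<Sum>k<N. \<Sum>l<N. A k l * (e k * e l)\<bar> \<le> (\<Sum>k<N. \<Sum>l<N. \<bar>A k l\<bar>) * (\<Sum>k<N. (e k)\<^sup>2)"
proof -
  define E where "E = (\<Sum>k<N. (e k)\<^sup>2)"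
  have sq: "(e k)\<^sup>2 \<le> E" if "k < N" for k
    unfolding E_def using that by (intro member_le_sum) auto
  have "\<bar>A k l * (e k * e l)\<bar> \<le> \<bar>A k l\<bar> * E" if "k < N" "l < N" for k l
  proof -
    have "2 * \<bar>e k\<bar> * \<bar>e l\<bar> \<le> \<bar>e k\<bar>\<^sup>2 + \<bar>e l\<bar>\<^sup>2" by (rule sum_squares_bound)
    with sq[OF that(1)] sq[OF that(2)] have "\<bar>e k * e l\<bar> \<le> E" by (simp add: abs_mult)
    then show ?thesis by (simp add: abs_mult mult_left_mono)
  qed
  then have "\<bar>\<Sum>k<N. \<Sum>l<N. A k l * (e k * e l)\<bar> \<le> (\<Sum>k<N. \<Sum>l<N. \<bar>A k l\<bar> * E)"
    by (intro order_trans[OF sum_abs] sum_mono order_trans[OF sum_abs]) auto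
  then show ?thesis by (simp add: E_def sum_distrib_right)
qed

text \<open>The squared distance E of two solutions satisfies E(0) = 0 and |E'| \<le> K E.\<close>

lemma linear_ode_unique:
  fixes u w :: "real \<Rightarrow> nat \<Rightarrow> real" and A :: "nat \<Rightarrow> nat \<Rightarrow> real"
  assumes ab: "a < 0" "0 < b"
    and u: "\<And>t k. t \<in> {a<..<b} \<Longrightarrow> k < N \<Longrightarrow>
      ((\<lambda>s. u s k) has_real_derivative (\<Sum>l<N. A k l * u t l) + D k) (at t)"
    and w: "\<And>t k. t \<in> {a<..<b} \<Longrightarrow> k < N \<Longrightarrow>
      ((\<lambda>s. w s k) has_real_derivative (\<Sum>l<N. A k l * w t l) + D k) (at t)"
    and init: "\<And>k. k < N \<Longrightarrow> u 0 k = w 0 k"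
    and "t \<in> {a<..<b}" "k < N"
  shows "u t k = w t k"
proof -
  define e where "e s k = u s k - w s k" for s k
  define E where "E s = (\<Sum>k<N. (e s k)\<^sup>2)" for s
  define K where "K = 2 * (\<Sum>k<N. \<Sum>l<N. \<bar>A k l\<bar>)"
  have de: "((\<lambda>s. e s k) has_real_derivative (\<Sum>l<N. A k l * e t l)) (at t)"
    if "t \<in> {a<..<b}" "k < N" for t k
    using DERIV_diff[OF u[OF that] w[OF that]]
    by (simp add: e_def sum_subtractf right_diff_distrib)
  have "E t = 0"
  proof (rule gronwall_vanishing[where E = E and E' = "\<lambda>s. 2 * (\<Sum>k<N. \<Sum>l<N. A k l * (e s k * e s l))",
        OF ab])
    show "E 0 = 0" using init by (simp add: E_def e_def)
    show "0 \<le> E s" for s by (simp add: E_def sum_nonneg)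
    show "(E has_real_derivative 2 * (\<Sum>k<N. \<Sum>l<N. A k l * (e s k * e s l))) (at s)"
      if "s \<in> {a<..<b}" for s
      unfolding E_def using de[OF that]
      by (auto intro!: derivative_eq_intros simp: sum_distrib_left sum_distrib_right mult_ac)
    show "\<bar>2 * (\<Sum>k<N. \<Sum>l<N. A k l * (e s k * e s l))\<bar> \<le> K * E s" for s
      using abs_quadratic_form_le[where A = A and N = N and e = "e s"] by (simp add: K_def E_def abs_mult)
  qed fact
  then have "(e t k)\<^sup>2 = 0"
    using \<open>k < N\<close> by (simp add: E_def sum_nonneg_eq_0_iff)
  then show ?thesis by (simp add: e_def)
qed

section \<open>Super-linearization\<close>

lemma is_solution_at_0:
  assumes "is_solution n f T x0 x" "x0 \<in> Rn n"
  shows "x 0 = x0"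
proof
  fix k
  have "x 0 \<in> Rn n" "\<forall>i<n. x 0 i = x0 i" using assms(1) by (simp_all add: is_solution_def)
  with assms(2) show "x 0 k = x0 k" by (cases "k < n") (simp_all add: Rn_def)
qed

lemma eq_if_observables_eq:
  assumes "\<And>i. i < n \<Longrightarrow> \<exists>k<N. obs k = (\<lambda>x. x i)"
    and "x \<in> Rn n" "y \<in> Rn n" "\<forall>k<N. obs k x = obs k y"
  shows "x = y"
proof
  fix i
  show "x i = y i"
  proof (cases "i < n")
    case True
    with assms(1,4) show ?thesis by fastforce
  next
    case False
    with assms(2,3) show ?thesis by (simp add: Rn_def)
  qed
qed

lemma lie_derivative_in_monomial_span:
  assumes "\<forall>i. 1 \<le> \<omega> i" "\<And>j. j < n \<Longrightarrow> weighted_poly n \<omega> (\<omega> j) (g j)"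
    and obs: "bij_betw obs {..<N} (monomials n \<omega> d)"
  shows "\<exists>L. \<forall>k<N. \<forall>x t. (\<forall>i<n. ((\<lambda>s. x s i) has_real_derivative g i (x t)) (at t)) \<longrightarrow>
    ((\<lambda>s. obs k (x s)) has_real_derivative (\<Sum>l<N. L k l * obs l (x t))) (at t)"
proof -
  have "\<exists>c. k < N \<longrightarrow> (\<forall>x t. (\<forall>i<n. ((\<lambda>s. x s i) has_real_derivative g i (x t)) (at t)) \<longrightarrow>
    ((\<lambda>s. obs k (x s)) has_real_derivative (\<Sum>l<N. c l * obs l (x t))) (at t))" for k
  proof (cases "k < N")
    case True
    then have "obs k \<in> monomials n \<omega> d" using obs by (auto simp: bij_betw_def)
    then obtain \<alpha> where "\<alpha> \<in> exponents n \<omega> d" "obs k = monomial n \<alpha>"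
      by (auto simp: monomials_def)
    then have "weighted_poly n \<omega> d (obs k)" by (simp add: weighted_poly_monomial)
    then obtain q' where q': "weighted_poly n \<omega> d q'"
      and dq: "\<forall>x t. (\<forall>i<n. ((\<lambda>s. x s i) has_real_derivative g i (x t)) (at t)) \<longrightarrow>
          ((\<lambda>s. obs k (x s)) has_real_derivative q' (x t)) (at t)"
      using weighted_poly_lie_derivative[of n \<omega> d "obs k" g] assms(2) by blast
    obtain c where "\<forall>x. q' x = (\<Sum>l<N. c l * obs l x)"
      using in_span_reindex[OF weighted_poly_in_span_monomials[OF q' assms(1)] obs] by blast
    with dq show ?thesis by (intro exI[of _ c]) simp
  qed simp
  then have "\<forall>k. \<exists>c. k < N \<longrightarrow> (\<forall>x t. (\<forall>i<n. ((\<lambda>s. x s i) has_real_derivative g i (x t)) (at t)) \<longrightarrow>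
    ((\<lambda>s. obs k (x s)) has_real_derivative (\<Sum>l<N. c l * obs l (x t))) (at t))" by blast
  from choice[OF this] show ?thesis by blast
qed

text \<open>Unknown k of the linear system stands for the observable r k; the first n unknowns are the
  coordinates. Along a solution x the observables evaluated at x solve the linear system, so
  uniqueness forces z to track them.\<close>

lemma linear_system_tracks_observables:
  fixes obs :: "nat \<Rightarrow> (nat \<Rightarrow> real) \<Rightarrow> real" and L :: "nat \<Rightarrow> nat \<Rightarrow> real"
    and n N :: nat and r :: "nat \<Rightarrow> nat"
  defines "A k l \<equiv> if l < n then 0 else L (r k) (l - n)"
  assumes r_coord: "\<And>k. k < n \<Longrightarrow> r k < N \<and> obs (r k) = (\<lambda>x. x k)"
    and r_shift: "\<And>l. r (n + l) = l"
    and closed: "\<And>k x t. k < N \<Longrightarrow> x t \<in> Rn n \<Longrightarrow>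
      \<forall>i<n. ((\<lambda>s. x s i) has_real_derivative f (x t) i) (at t) \<Longrightarrow>
      ((\<lambda>s. obs k (x s)) has_real_derivative (\<Sum>l<N. L k l * obs l (x t))) (at t)"
    and z_coord: "\<forall>k<n. z 0 k = x0 k" and z_obs: "\<forall>k<N. z 0 (n + k) = obs k x0"
    and z_deriv: "\<forall>t. \<forall>k<n + N. ((\<lambda>s. z s k) has_real_derivative (\<Sum>l<n + N. A k l * z t l) + 0) (at t)"
    and x: "a < 0" "0 < b" "is_solution n f {a<..<b} x0 x" "x0 \<in> Rn n"
    and "t \<in> {a<..<b}" "i < n"
  shows "z t i = x t i"
proof -
  define \<psi> where "\<psi> s k = obs (r k) (x s)" for s k
  have r: "r k < N" if "k < n + N" for k
    using r_coord[of k] r_shift[of "k - n"] that by (cases "k < n") auto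
  have A_sum: "(\<Sum>l<n + M. A k l * y l) = (\<Sum>l<M. L (r k) l * y (n + l))" for k y M
    by (induction M) (auto simp: A_def)
  have \<psi>_coord: "\<psi> s k = x s k" if "k < n" for s k
    using r_coord[OF that] by (simp add: \<psi>_def)
  have \<psi>_shift: "\<psi> s (n + l) = obs l (x s)" for s l
    by (simp add: \<psi>_def r_shift)
  have \<psi>_deriv: "((\<lambda>s. \<psi> s k) has_real_derivative (\<Sum>l<n + N. A k l * \<psi> t' l) + 0) (at t')"
    if "t' \<in> {a<..<b}" "k < n + N" for t' k
  proof -
    have "x t' \<in> Rn n" "\<forall>i<n. ((\<lambda>s. x s i) has_real_derivative f (x t') i) (at t')"
      using x(3) that(1) by (auto simp: is_solution_def)
    from closed[OF r[OF that(2)] this] show ?thesis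
      unfolding A_sum \<psi>_shift by (simp add: \<psi>_def)
  qed
  have x0_eq: "x 0 = x0" using x(3,4) by (rule is_solution_at_0)
  have init: "z 0 k = \<psi> 0 k" if "k < n + N" for k
  proof (cases "k < n")
    case True
    with z_coord x0_eq \<psi>_coord show ?thesis by simp
  next
    case False
    define l where "l = k - n"
    with False that have "k = n + l" "l < N" by simp_all
    with z_obs x0_eq show ?thesis by (simp add: \<psi>_shift)
  qed
  have z_deriv': "((\<lambda>s. z s k) has_real_derivative (\<Sum>l<n + N. A k l * z t' l) + 0) (at t')"
    if "t' \<in> {a<..<b}" "k < n + N" for t' k
    using z_deriv that(2) by blast
  have "i < n + N" using \<open>i < n\<close> by simp
  with x(1,2) z_deriv' \<psi>_deriv init \<open>t \<in> {a<..<b}\<close> have "z t i = \<psi> t i"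
    by (rule linear_ode_unique)
  with \<psi>_coord[OF \<open>i < n\<close>] show ?thesis by simp
qed

lemma super_linearizable_if_closed_observables:
  fixes obs :: "nat \<Rightarrow> (nat \<Rightarrow> real) \<Rightarrow> real" and L :: "nat \<Rightarrow> nat \<Rightarrow> real"
  assumes coords: "\<And>i. i < n \<Longrightarrow> \<exists>k<N. obs k = (\<lambda>x. x i)"
    and closed: "\<And>k x t. k < N \<Longrightarrow> x t \<in> Rn n \<Longrightarrow>
      \<forall>i<n. ((\<lambda>s. x s i) has_real_derivative f (x t) i) (at t) \<Longrightarrow>
      ((\<lambda>s. obs k (x s)) has_real_derivative (\<Sum>l<N. L k l * obs l (x t))) (at t)"
  shows "super_linearizable n f"
proof -
  from coords have "\<forall>i. \<exists>k. i < n \<longrightarrow> k < N \<and> obs k = (\<lambda>x. x i)" by blast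
  from choice[OF this] obtain idx where idx: "\<And>i. i < n \<Longrightarrow> idx i < N \<and> obs (idx i) = (\<lambda>x. x i)"
    by blast
  define r where "r k = (if k < n then idx k else k - n)" for k
  have r_coord: "r k < N \<and> obs (r k) = (\<lambda>x. x k)" if "k < n" for k
    using idx[OF that] that by (simp add: r_def)
  have r_shift: "r (n + l) = l" for l by (simp add: r_def)
  show ?thesis
    unfolding super_linearizable_def
  proof (intro exI[of _ N] exI[of _ "\<lambda>k l. if l < n then 0 else L (r k) (l - n)"] exI[of _ "\<lambda>_. 0"]
      exI[of _ "\<lambda>x k. obs k x"] conjI ballI allI impI)
    show "x = y" if "x \<in> Rn n" "y \<in> Rn n" "\<forall>k<N. obs k x = obs k y" for x y
      using eq_if_observables_eq[OF coords that] by blast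
  next
    fix x0 z a b x t i
    assume "x0 \<in> Rn n"
      and "(\<forall>k<n. z 0 k = x0 k) \<and> (\<forall>k<N. z 0 (n + k) = obs k x0) \<and>
        (\<forall>t. \<forall>k<n + N. ((\<lambda>s. z s k) has_real_derivative
           (\<Sum>l<n + N. (if l < n then 0 else L (r k) (l - n)) * z t l) + 0) (at t))"
      and "a < 0 \<and> 0 < b \<and> is_solution n f {a<..<b} x0 x" "t \<in> {a<..<b}" "i < n"
    then show "z t i = x t i"
      using linear_system_tracks_observables[OF r_coord r_shift closed] by blast
  qed
qed

theorem theorem1:
  fixes n :: nat and f :: "(nat \<Rightarrow> real) \<Rightarrow> (nat \<Rightarrow> real)"
  assumes "poly_vector_field n f"
    and "\<forall>c. dep_cycle n f c \<longrightarrow> (\<exists>w. \<forall>x\<in>Rn n. cycle_weight f c x = w)"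
  shows "super_linearizable n f"
proof -
  obtain \<omega> g where \<omega>: "\<And>i. 1 \<le> \<omega> i" and g: "\<And>j. j < n \<Longrightarrow> weighted_poly n \<omega> (\<omega> j) (g j)"
    and fg: "\<And>j x. j < n \<Longrightarrow> x \<in> Rn n \<Longrightarrow> f x j = g j x"
    using field_weighted[OF assms] by metis
  define W where "W = (\<Sum>j<n. \<omega> j)"
  define N where "N = card (monomials n \<omega> W)"
  have fin: "finite (monomials n \<omega> W)" using \<omega> by (intro finite_monomials) blast
  obtain obs where obs: "bij_betw obs {..<N} (monomials n \<omega> W)"
    using ex_bij_betw_nat_finite[OF fin] by (auto simp: N_def atLeast0LessThan)
  have \<omega>_pos: "\<forall>i. 1 \<le> \<omega> i" using \<omega> by blast
  obtain L where L: "\<forall>k<N. \<forall>x t. (\<forall>i<n. ((\<lambda>s. x s i) has_real_derivative g i (x t)) (at t)) \<longrightarrow>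
      ((\<lambda>s. obs k (x s)) has_real_derivative (\<Sum>l<N. L k l * obs l (x t))) (at t)"
    using lie_derivative_in_monomial_span[OF \<omega>_pos g obs] by blast
  show ?thesis
  proof (rule super_linearizable_if_closed_observables)
    fix i assume "i < n"
    then have "(\<lambda>x. x i) \<in> monomials n \<omega> W"
      by (intro coordinate_in_monomials) (auto simp: W_def intro: member_le_sum)
    with obs show "\<exists>k<N. obs k = (\<lambda>x. x i)"
      unfolding bij_betw_def by (metis imageE lessThan_iff)
  next
    fix k x t assume k: "k < N" and "x t \<in> Rn n"
      and "\<forall>i<n. ((\<lambda>s. x s i) has_real_derivative f (x t) i) (at t)"
    with fg have "\<forall>i<n. ((\<lambda>s. x s i) has_real_derivative g i (x t)) (at t)" by simp
    with k show "((\<lambda>s. obs k (x s)) has_real_derivative (\<Sum>l<N. L k l * obs l (x t))) (at t)"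
      using L by blast
  qed
qed

end
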